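(* Let $q>0$, $q\neq1$, and $\nu\in\mathbb{R}$. For every integer $N\ge 0$, $$H_N(x,\nu t;q)=\sum_{k=0}^{\lfloor N/2\rfloor}\frac{(\nu t)^k x^{N-2k}[N]_q!}{k!\,[N-2k]_q!},$$ one has the identity of formal power series in $k$ $$e^{\nu k^2 t}\,e_q(kx)=\sum_{N=0}^\infty H_N(x,\nu t;q)\frac{k^N}{[N]_q!},$$ and each $\phi(x,t)=H_N(x,\nu t;q)$ solves the $q$-heat equation $\partial_t\phi(x,t)-\nu D_x^2\phi(x,t)=0$ for all real $t$ and real $x\neq0$.
   Context: For $n\ge 0$ let $[n]_q=\frac{q^n-1}{q-1}$, $[0]_q!=1$, $[n]_q!=[1]_q\cdots[n]_q$, and $e_q(z)=\sum_{n\ge0}z^n/[n]_q!$. The $q$-derivative in $x$ is $D_xf(x)=\frac{f(qx)-f(x)}{(q-1)x}$ (acting at fixed $t$), $D_x^2=D_x\circ D_x$, and $\partial_t$ is the ordinary partial derivative. The $q$-Hermite polynomials $H_N(y;q)$ are defined by the identity of formal power series in $s$: $e^{-s^2}e_q([2]_q s y)=\sum_{N\ge0}H_N(y;q)\,s^N/[N]_q!$; $H_N(y;q)$ contains only monomials $y^{N-2k}$. The $q$-Kampe-de Feriet polynomials are $H_N(x,\nu t;q)=(-\nu t)^{N/2}H_N\big(\tfrac{x}{[2]_q\sqrt{-\nu t}};q\big)$, understood as the resulting polynomial in $x$ and $\nu t$. *)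

theory Defs
  imports "HOL-Analysis.Analysis" "HOL-Computational_Algebra.Formal_Power_Series"
    "HOL-Computational_Algebra.Polynomial"
begin

definition qnum :: "real \<Rightarrow> nat \<Rightarrow> real" where
  "qnum q n = (q ^ n - 1) / (q - 1)"

definition qfact :: "real \<Rightarrow> nat \<Rightarrow> real" where
  "qfact q n = (\<Prod>i=1..n. qnum q i)"

definition eq_fps :: "real \<Rightarrow> real \<Rightarrow> real fps" where
  "eq_fps q x = Abs_fps (\<lambda>n. x ^ n / qfact q n)"

definition qD :: "real \<Rightarrow> (real \<Rightarrow> real) \<Rightarrow> real \<Rightarrow> real" where
  "qD q f x = (f (q * x) - f x) / ((q - 1) * x)"

text \<open>q-Hermite polynomials H_N(y;q), defined by the generating function
  e^{-s^2} e_q([2]_q s y) = \<Sum>_N H_N(y;q) s^N/[N]_q!  (power series in s with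
  coefficients polynomials in y).\<close>
definition qHermite :: "real \<Rightarrow> nat \<Rightarrow> real poly" where
  "qHermite q N = smult (qfact q N)
     (fps_nth (Abs_fps (\<lambda>n. if even n then [: (-1) ^ (n div 2) / fact (n div 2) :] else 0)
             * Abs_fps (\<lambda>n. smult (1 / qfact q n) ([:0, qnum q 2:] ^ n))) N)"

text \<open>q-Kampe-de Feriet polynomials H_N(x, w; q) = (-w)^{N/2} H_N(x/([2]_q sqrt(-w)); q),
  as a polynomial in x and w: the monomial c_j y^j of H_N (with N - j even) becomes
  c_j (x/[2]_q)^j (-w)^{(N-j)/2}.\<close>
definition qKdF :: "real \<Rightarrow> nat \<Rightarrow> real \<Rightarrow> real \<Rightarrow> real" where
  "qKdF q N x w = (\<Sum>j\<le>N. if even (N - j)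
       then coeff (qHermite q N) j * (x / qnum q 2) ^ j * (- w) ^ ((N - j) div 2) else 0)"

end

theory Submission
  imports Defs
begin

text \<open>Write H_N(x,w;q) = sum_k c_k w^k x^(N-2k). The coefficients
  c_k = [N]_q! / (k! [N-2k]_q!) are read off from the Cauchy product defining the q-Hermite
  polynomials, and the same Cauchy product, taken with e^(w s^2) in place of e^(-s^2), gives the
  generating function. For the heat equation, d/dt sends the k-th term to
  k nu c_k (nu t)^(k-1) x^(N-2k), while D_x^2 sends the (k-1)-th term to
  c_(k-1) [N-2k+2]_q [N-2k+1]_q (nu t)^(k-1) x^(N-2k); these agree because
  k c_k = c_(k-1) [N-2k+2]_q [N-2k+1]_q, and D_x^2 kills the top term, of degree 0 or 1 in x.\<close>

lemma sum_even_div2_eq_atMost: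
  "(\<Sum>i=0..(n::nat). if even i then g (i div 2) else 0) = (\<Sum>m\<le>n div 2. g m :: 'a::comm_monoid_add)"
proof (induction n)
  case (Suc n)
  then show ?case
    by (cases "even n") (auto simp: sum.atMost_Suc elim!: oddE)
qed simp

lemma sum_atMost_shift_eq:
  fixes a b :: "nat \<Rightarrow> 'a::comm_monoid_add"
  assumes "a 0 = 0" and "b M = 0" and "\<And>k. k < M \<Longrightarrow> a (Suc k) = b k"
  shows "(\<Sum>k\<le>M. a k) = (\<Sum>k\<le>M. b k)"
proof (cases M)
  case (Suc m)
  have "(\<Sum>k\<le>M. a k) = (\<Sum>k\<le>m. a (Suc k))"
    unfolding Suc sum.atMost_Suc_shift using assms(1) by simp
  also have "\<dots> = (\<Sum>k\<le>m. b k)"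
    using assms(3) by (simp add: Suc)
  also have "\<dots> = (\<Sum>k\<le>M. b k)"
    using assms(2) by (simp add: Suc)
  finally show ?thesis .
qed (use assms in simp)

lemma monom_power_eq: "[:0, a:] ^ n = monom (a ^ n) n"
proof -
  have "[:0, a:] = monom a 1"
    by (simp add: monom_Suc monom_0)
  then show ?thesis
    by (simp add: monom_power)
qed

lemma qnum_0 [simp]: "qnum q 0 = 0"
  by (simp add: qnum_def)

lemma qnum_nonzero:
  assumes "q > 0" "q \<noteq> 1" "n > 0"
  shows "qnum q n \<noteq> 0"
proof -
  have "q ^ n \<noteq> 1"
    using assms power_eq_1_iff[of q n] by auto
  then show ?thesis
    using assms by (simp add: qnum_def)
qed

lemma qfact_Suc: "qfact q (Suc n) = qfact q n * qnum q (Suc n)"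
  by (simp add: qfact_def prod.nat_ivl_Suc')

lemma qfact_nonzero:
  assumes "q > 0" "q \<noteq> 1"
  shows "qfact q n \<noteq> 0"
  using assms by (induction n) (auto simp: qfact_Suc qfact_def[of q 0] qnum_nonzero)

lemma coeff_qHermite:
  assumes "j \<le> N"
  shows "coeff (qHermite q N) j =
    (if even (N - j) then qfact q N * (-1) ^ ((N - j) div 2) / fact ((N - j) div 2)
                          * qnum q 2 ^ j / qfact q j else 0)"
proof -
  let ?a = "\<lambda>i. if even i then (-1) ^ (i div 2) / fact (i div 2) else (0::real)"
  have "coeff (qHermite q N) j =
      qfact q N * (\<Sum>i=0..N. ?a i * (1 / qfact q (N - i) * (if j = N - i then qnum q 2 ^ (N - i) else 0)))"
    unfolding qHermite_def fps_mult_nth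
    by (simp add: coeff_sum monom_power_eq, rule disjI2, rule sum.cong) (auto simp: coeff_monom)
  also have "\<dots> = qfact q N * (\<Sum>i=0..N. if i = N - j then ?a i * (1 / qfact q (N - i) * qnum q 2 ^ (N - i)) else 0)"
    using assms by (intro arg_cong[of _ _ "\<lambda>s. qfact q N * s"] sum.cong) auto
  also have "\<dots> = qfact q N * (?a (N - j) * (1 / qfact q j * qnum q 2 ^ j))"
    using assms by (simp add: sum.delta)
  finally show ?thesis by simp
qed

definition kdf_coeff :: "real \<Rightarrow> nat \<Rightarrow> nat \<Rightarrow> real" where
  "kdf_coeff q N k = qfact q N / (fact k * qfact q (N - 2 * k))"

lemma qKdF_eq_sum_kdf_coeff:
  assumes q: "q > 0" "q \<noteq> 1"
  shows "qKdF q N x w = (\<Sum>k\<le>N div 2. kdf_coeff q N k * w ^ k * x ^ (N - 2 * k))"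
proof -
  let ?G = "\<lambda>k. kdf_coeff q N k * w ^ k * x ^ (N - 2 * k)"
  have q2: "qnum q 2 \<noteq> 0"
    using qnum_nonzero[OF q] by simp
  have "qKdF q N x w = (\<Sum>j=0..N. if even (N - j) then ?G ((N - j) div 2) else 0)"
    unfolding qKdF_def atMost_atLeast0
  proof (intro sum.cong refl)
    fix j assume j: "j \<in> {0..N}"
    show "(if even (N - j) then coeff (qHermite q N) j * (x / qnum q 2) ^ j * (- w) ^ ((N - j) div 2) else 0)
        = (if even (N - j) then ?G ((N - j) div 2) else 0)"
    proof (cases "even (N - j)")
      case True
      define m where "m = (N - j) div 2"
      have "N - 2 * m = j"
        using True j by (auto simp: m_def)
      moreover have "(-1::real) ^ m * (- w) ^ m = w ^ m"
        by (simp flip: power_mult_distrib)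
      moreover have "qnum q 2 ^ j * (x / qnum q 2) ^ j = x ^ j"
        using q2 by (simp add: power_divide)
      ultimately show ?thesis
        using True j q2 by (simp add: coeff_qHermite kdf_coeff_def flip: m_def) (simp add: field_simps)
    qed simp
  qed
  also have "\<dots> = (\<Sum>i=0..N. if even i then ?G (i div 2) else 0)"
    by (subst sum.atLeastAtMost_rev) (auto intro: sum.cong)
  also have "\<dots> = (\<Sum>k\<le>N div 2. ?G k)"
    by (rule sum_even_div2_eq_atMost)
  finally show ?thesis .
qed

lemma qKdF_eq_sum:
  assumes "q > 0" "q \<noteq> 1"
  shows "qKdF q N x w =
    (\<Sum>k\<le>N div 2. w ^ k * x ^ (N - 2 * k) * qfact q N / (fact k * qfact q (N - 2 * k)))"
  unfolding qKdF_eq_sum_kdf_coeff[OF assms] kdf_coeff_def by (simp add: mult_ac)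

lemma fps_nth_exp_compose_X2:
  "fps_nth (fps_exp c oo fps_X ^ 2) n = (if even n then c ^ (n div 2) / fact (n div 2) else (0::real))"
proof -
  have "fps_nth (fps_exp c oo fps_X ^ 2) n = (\<Sum>i=0..n. if i = n div 2 \<and> even n then c ^ i / fact i else 0)"
    by (auto simp: fps_compose_nth mult.commute simp flip: power_mult intro!: sum.cong)
  then show ?thesis
    by (simp add: sum.delta)
qed

lemma exp_X2_times_eq_fps:
  assumes q: "q > 0" "q \<noteq> 1"
  shows "(fps_exp w oo fps_X ^ 2) * eq_fps q x = Abs_fps (\<lambda>N. qKdF q N x w / qfact q N)"
proof (rule fps_ext)
  fix n
  let ?g = "\<lambda>m. w ^ m / fact m * (x ^ (n - 2 * m) / qfact q (n - 2 * m))"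
  have "fps_nth ((fps_exp w oo fps_X ^ 2) * eq_fps q x) n = (\<Sum>i=0..n. if even i then ?g (i div 2) else 0)"
    unfolding fps_mult_nth eq_fps_def by (auto simp: fps_nth_exp_compose_X2 intro: sum.cong)
  also have "\<dots> = (\<Sum>m\<le>n div 2. ?g m)"
    by (rule sum_even_div2_eq_atMost)
  also have "\<dots> = qKdF q n x w / qfact q n"
    unfolding qKdF_eq_sum[OF q] sum_divide_distrib
    using qfact_nonzero[OF q] by (auto intro: sum.cong)
  finally show "fps_nth ((fps_exp w oo fps_X ^ 2) * eq_fps q x) n = fps_nth (Abs_fps (\<lambda>N. qKdF q N x w / qfact q N)) n"
    by simp
qed

lemma qD_sum_monomials:
  assumes "x \<noteq> 0" "q \<noteq> 1"
  shows "qD q (\<lambda>y. \<Sum>k\<in>A. c k * y ^ n k) x = (\<Sum>k\<in>A. c k * qnum q (n k) * x ^ (n k - 1))"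
proof -
  have "c * (q * x) ^ m - c * x ^ m = (q - 1) * x * (c * qnum q m * x ^ (m - 1))" for c m
    using assms by (cases m) (simp_all add: qnum_def power_mult_distrib field_simps)
  then show ?thesis
    using assms unfolding qD_def sum_subtractf[symmetric] sum_divide_distrib by simp
qed

lemma qD_qD_sum_monomials:
  assumes "x \<noteq> 0" "q \<noteq> 0" "q \<noteq> 1"
  shows "qD q (qD q (\<lambda>y. \<Sum>k\<in>A. c k * y ^ n k)) x
       = (\<Sum>k\<in>A. c k * qnum q (n k) * qnum q (n k - 1) * x ^ (n k - 2))"
proof -
  have "qD q (\<lambda>y. \<Sum>k\<in>A. c k * y ^ n k) y = (\<Sum>k\<in>A. (c k * qnum q (n k)) * y ^ (n k - 1))"
    if "y \<in> {x, q * x}" for y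
    using that assms by (auto simp: qD_sum_monomials)
  then have "qD q (qD q (\<lambda>y. \<Sum>k\<in>A. c k * y ^ n k)) x
      = qD q (\<lambda>y. \<Sum>k\<in>A. (c k * qnum q (n k)) * y ^ (n k - 1)) x"
    by (simp add: qD_def)
  also have "\<dots> = (\<Sum>k\<in>A. c k * qnum q (n k) * qnum q (n k - 1) * x ^ (n k - 2))"
    using assms by (simp add: qD_sum_monomials diff_diff_add numeral_2_eq_2)
  finally show ?thesis .
qed

lemma kdf_coeff_Suc:
  assumes q: "q > 0" "q \<noteq> 1" and k: "2 * Suc k \<le> N"
  shows "of_nat (Suc k) * kdf_coeff q N (Suc k)
       = kdf_coeff q N k * qnum q (N - 2 * k) * qnum q (N - 2 * k - 1)"
proof -
  obtain r where r: "N - 2 * k = Suc (Suc r)" "N - 2 * Suc k = r"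
    using k by (intro that[of "N - 2 * k - 2"]) auto
  have "qfact q (Suc (Suc r)) = qfact q r * qnum q (Suc r) * qnum q (Suc (Suc r))"
    by (simp add: qfact_Suc)
  moreover have "qfact q r \<noteq> 0" "qnum q (Suc r) \<noteq> 0" "qnum q (Suc (Suc r)) \<noteq> 0"
    using qfact_nonzero[OF q] qnum_nonzero[OF q] by auto
  moreover have "fact (Suc k) = of_nat (Suc k) * (fact k :: real)"
    by simp
  ultimately show ?thesis
    unfolding kdf_coeff_def r by (simp only:) (simp add: field_simps del: of_nat_Suc)
qed

lemma qKdF_heat_equation:
  assumes q: "q > 0" "q \<noteq> 1" and x: "x \<noteq> 0"
  shows "((\<lambda>s. qKdF q N x (\<nu> * s)) has_real_derivative
            \<nu> * qD q (qD q (\<lambda>y. qKdF q N y (\<nu> * t))) x) (at t)"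
proof -
  let ?c = "kdf_coeff q N"
  let ?M = "N div 2"
  have "((\<lambda>s. qKdF q N x (\<nu> * s)) has_real_derivative
      (\<Sum>k\<le>?M. ?c k * (of_nat k * (\<nu> * t) ^ (k - 1) * \<nu>) * x ^ (N - 2 * k))) (at t)"
    unfolding qKdF_eq_sum_kdf_coeff[OF q]
    by (rule DERIV_sum) (auto intro!: derivative_eq_intros)
  also have "(\<Sum>k\<le>?M. ?c k * (of_nat k * (\<nu> * t) ^ (k - 1) * \<nu>) * x ^ (N - 2 * k))
      = (\<Sum>k\<le>?M. \<nu> * (?c k * (\<nu> * t) ^ k * qnum q (N - 2 * k) * qnum q (N - 2 * k - 1)
                                * x ^ (N - 2 * k - 2)))"
  proof (rule sum_atMost_shift_eq)
    have "N - 2 * ?M = 0 \<or> N - 2 * ?M = 1"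
      by auto
    then show "\<nu> * (?c ?M * (\<nu> * t) ^ ?M * qnum q (N - 2 * ?M) * qnum q (N - 2 * ?M - 1)
        * x ^ (N - 2 * ?M - 2)) = 0"
      by auto
  next
    fix k assume "k < ?M"
    then have "2 * Suc k \<le> N"
      by auto
    from kdf_coeff_Suc[OF q this] show
      "?c (Suc k) * (of_nat (Suc k) * (\<nu> * t) ^ (Suc k - 1) * \<nu>) * x ^ (N - 2 * Suc k)
       = \<nu> * (?c k * (\<nu> * t) ^ k * qnum q (N - 2 * k) * qnum q (N - 2 * k - 1) * x ^ (N - 2 * k - 2))"
      by (simp add: diff_diff_add mult_ac)
  qed simp
  also have "\<dots> = \<nu> * qD q (qD q (\<lambda>y. \<Sum>k\<le>?M. (?c k * (\<nu> * t) ^ k) * y ^ (N - 2 * k))) x"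
    using q x by (subst qD_qD_sum_monomials) (simp_all add: sum_distrib_left mult_ac)
  also have "\<dots> = \<nu> * qD q (qD q (\<lambda>y. qKdF q N y (\<nu> * t))) x"
    by (simp add: qKdF_eq_sum_kdf_coeff[OF q] mult_ac)
  finally show ?thesis .
qed

theorem mainTheorem7:
  fixes q \<nu> :: real
  assumes "q > 0" and "q \<noteq> 1"
  shows "\<forall>N::nat.
     (\<forall>x t::real. qKdF q N x (\<nu> * t) =
        (\<Sum>k\<le>N div 2. (\<nu> * t) ^ k * x ^ (N - 2 * k) * qfact q N
                          / (fact k * qfact q (N - 2 * k))))
   \<and> (\<forall>x t::real. (fps_exp (\<nu> * t) oo fps_X ^ 2) * eq_fps q x
                   = Abs_fps (\<lambda>N. qKdF q N x (\<nu> * t) / qfact q N))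
   \<and> (\<forall>x t::real. x \<noteq> 0 \<longrightarrow>
        ((\<lambda>s. qKdF q N x (\<nu> * s)) has_real_derivative
            \<nu> * qD q (qD q (\<lambda>y. qKdF q N y (\<nu> * t))) x) (at t))"
  using qKdF_eq_sum[OF assms] exp_X2_times_eq_fps[OF assms] qKdF_heat_equation[OF assms]
  by blast

end
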